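(* Assume values are i.i.d. on $[0,\bar v]$ with CDF $F$ and density $f>0$, and $1 \le k < n$. Let $A$ be the efficient allocation rule. Let $v_{(k+1)}$ denote the $(k+1)$-st highest value, and define $b(0) = 0$ and, for $v > 0$, $b(v) = \mathbb E[v_{(k+1)} \mid v_i = v, A_i(\bm v) = 1]$. Define $R^D(\bm v) = \sum_{i=1}^n A_i(\bm v)\,b(v_i)$ (revenue of the discriminatory winner-pays-bid auction in its symmetric strictly increasing equilibrium) and $R^U(\bm v) = k\,v_{(k+1)}$ (revenue of the uniform $(k+1)$-st price auction). Then $\mathrm{Var}[R^D(\bm v)] \le \mathrm{Var}[R^U(\bm v)]$.
   Context: Setting: $n$ risk-neutral unit-demand bidders and $k$ identical items. The efficient allocation rule gives one item to each of the $k$ bidders with the highest values (ties, a probability-zero event, broken by any fixed rule). *)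

theory Defs
  imports "HOL-Probability.Probability"
begin

definition value_dist :: "(real \<Rightarrow> real) \<Rightarrow> real \<Rightarrow> real measure" where
  "value_dist f vbar = density lborel (\<lambda>x. ennreal (f x * indicator {0..vbar} x))"

definition profile_dist :: "nat \<Rightarrow> (real \<Rightarrow> real) \<Rightarrow> real \<Rightarrow> (nat \<Rightarrow> real) measure" where
  "profile_dist n f vbar = PiM {..<n} (\<lambda>_. value_dist f vbar)"

definition eff_alloc :: "nat \<Rightarrow> nat \<Rightarrow> nat \<Rightarrow> (nat \<Rightarrow> real) \<Rightarrow> bool" where
  "eff_alloc n k i v \<longleftrightarrow> i < n \<and> card {j \<in> {..<n}. v i < v j \<or> (v j = v i \<and> j < i)} < k"

text \<open>m-th highest value (1-indexed) among v 0, ..., v (n-1).\<close>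
definition order_stat :: "nat \<Rightarrow> (nat \<Rightarrow> real) \<Rightarrow> nat \<Rightarrow> real" where
  "order_stat n v m = rev (sort (map v [0..<n])) ! (m - 1)"

text \<open>b(v) = E[v_(k+1) | v_i = v, A_i = 1] for v > 0 (conditioning on v_i = v computed by
  fixing coordinate i and integrating out the other independent values); b(0) = 0.\<close>
definition bid_fn :: "nat \<Rightarrow> nat \<Rightarrow> (real \<Rightarrow> real) \<Rightarrow> real \<Rightarrow> nat \<Rightarrow> real \<Rightarrow> real" where
  "bid_fn n k f vbar i x =
     (if x \<le> 0 then 0 else
       (\<integral>w. order_stat n (w(i := x)) (k+1) * of_bool (eff_alloc n k i (w(i := x)))
          \<partial>profile_dist n f vbar)
       / measure (profile_dist n f vbar)
           {w \<in> space (profile_dist n f vbar). eff_alloc n k i (w(i := x))})"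

definition rev_disc :: "nat \<Rightarrow> nat \<Rightarrow> (real \<Rightarrow> real) \<Rightarrow> real \<Rightarrow> (nat \<Rightarrow> real) \<Rightarrow> real" where
  "rev_disc n k f vbar v = (\<Sum>i<n. of_bool (eff_alloc n k i v) * bid_fn n k f vbar i (v i))"

definition rev_unif :: "nat \<Rightarrow> nat \<Rightarrow> (nat \<Rightarrow> real) \<Rightarrow> real" where
  "rev_unif n k v = real k * order_stat n v (k+1)"

definition var :: "'a measure \<Rightarrow> ('a \<Rightarrow> real) \<Rightarrow> real" where
  "var M X = (\<integral>x. (X x - (\<integral>y. X y \<partial>M))^2 \<partial>M)"

end

theory Submission
  imports Defs
begin

text \<open>Write \<open>Y = v\<^sub>(\<^sub>k\<^sub>+\<^sub>1\<^sub>)\<close> and \<open>A\<^sub>i\<close> for the allocation. Conditioning on the value of bidder i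
  (integrating out the other coordinates with \<open>v\<^sub>i = x\<close> fixed), the definition of the bid says
  \<open>b(x) P[A\<^sub>i | v\<^sub>i = x] = E[Y A\<^sub>i | v\<^sub>i = x]\<close>, so \<open>E[A\<^sub>i b(v\<^sub>i)] = E[Y A\<^sub>i]\<close>; summing over i and using
  that there are exactly k winners gives \<open>E[R\<^sup>D] = k E[Y] = E[R\<^sup>U]\<close>. For second moments, Cauchy-Schwarz
  over the k winners gives \<open>(R\<^sup>D)\<^sup>2 \<le> k \<Sum>\<^sub>i A\<^sub>i b(v\<^sub>i)\<^sup>2\<close>, and Cauchy-Schwarz for the conditional
  expectation gives \<open>b(x)\<^sup>2 P[A\<^sub>i | v\<^sub>i = x] \<le> E[Y\<^sup>2 A\<^sub>i | v\<^sub>i = x]\<close>; hence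
  \<open>E[(R\<^sup>D)\<^sup>2] \<le> k \<Sum>\<^sub>i E[Y\<^sup>2 A\<^sub>i] = E[(R\<^sup>U)\<^sup>2]\<close>. Equal means and ordered second moments give the claim.\<close>

section \<open>Order statistics and the number of winners\<close>

lemma insort_map: "insort (v x) (map v ys) = map v (insort_key v x ys)"
  by (induction ys) auto

lemma sort_map: "sort (map v xs) = map v (sort_key v xs)"
  by (induction xs) (auto simp: insort_map)

lemma insort_key_cong:
  "\<forall>a\<in>set (x#ys). \<forall>b\<in>set (x#ys). (f a \<le> f b) = (g a \<le> g b) \<Longrightarrow>
    insort_key f x ys = insort_key g x ys"
  by (induction ys) auto

lemma sort_key_cong:
  "\<forall>a\<in>set xs. \<forall>b\<in>set xs. (f a \<le> f b) = (g a \<le> g b) \<Longrightarrow> sort_key f xs = sort_key g xs"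
  by (induction xs) (simp_all add: insort_key_cong)

definition order_stat_index :: "nat \<Rightarrow> (nat \<Rightarrow> real) \<Rightarrow> nat \<Rightarrow> nat" where
  "order_stat_index n v m = rev (sort_key v [0..<n]) ! (m - 1)"

lemma order_stat_index_less: "m - 1 < n \<Longrightarrow> order_stat_index n v m < n"
  using nth_mem[of "m - 1" "rev (sort_key v [0..<n])"] by (simp add: order_stat_index_def)

lemma order_stat_eq_index: "m - 1 < n \<Longrightarrow> order_stat n v m = v (order_stat_index n v m)"
  by (simp add: order_stat_def order_stat_index_def sort_map rev_map)

lemma order_stat_index_cong:
  "\<forall>a<n. \<forall>b<n. (v a \<le> v b) = (u a \<le> u b) \<Longrightarrow> order_stat_index n v m = order_stat_index n u m"
  unfolding order_stat_index_def by (subst sort_key_cong[of _ v u]) auto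

lemma order_stat_between:
  assumes "m - 1 < n" and "\<forall>j<n. lo \<le> v j \<and> v j \<le> hi"
  shows "lo \<le> order_stat n v m \<and> order_stat n v m \<le> hi"
  using assms order_stat_index_less[OF assms(1)] by (simp add: order_stat_eq_index)

lemma card_rank_less:
  fixes R :: "'a \<Rightarrow> 'a \<Rightarrow> bool"
  assumes fin: "finite A" and R_irrefl: "\<And>x. \<not> R x x"
    and R_trans: "\<And>x y z. R x y \<Longrightarrow> R y z \<Longrightarrow> R x z"
    and R_total: "\<And>x y. x \<in> A \<Longrightarrow> y \<in> A \<Longrightarrow> x \<noteq> y \<Longrightarrow> R x y \<or> R y x"
    and k: "k \<le> card A"
  shows "card {i\<in>A. card {j\<in>A. R i j} < k} = k"
proof -
  define r where "r i = card {j\<in>A. R i j}" for i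
  have r_less: "r j < r i" if "i \<in> A" "j \<in> A" "R i j" for i j
  proof -
    have "{l\<in>A. R j l} \<subset> {l\<in>A. R i l}"
      using that R_trans R_irrefl by blast
    then show ?thesis unfolding r_def using fin by (intro psubset_card_mono) auto
  qed
  have inj: "inj_on r A"
  proof (rule inj_onI)
    fix x y assume "x \<in> A" "y \<in> A" "r x = r y"
    then show "x = y" using R_total[of x y] r_less[of x y] r_less[of y x] by fastforce
  qed
  have "r ` A \<subseteq> {..<card A}"
  proof
    fix y assume "y \<in> r ` A"
    then obtain i where i: "i \<in> A" "y = r i" by auto
    then have "{j\<in>A. R i j} \<subset> A" using R_irrefl by auto
    then show "y \<in> {..<card A}" using i fin unfolding r_def by (auto intro: psubset_card_mono)
  qed
  then have image_r: "r ` A = {..<card A}"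
    using inj card_image by (intro card_subset_eq) auto
  have "r ` {i\<in>A. r i < k} = r ` A \<inter> {..<k}"
    by auto
  also have "\<dots> = {..<k}"
    using image_r k by auto
  finally have "r ` {i\<in>A. r i < k} = {..<k}" .
  then have "card {i\<in>A. r i < k} = k"
    using card_image[OF inj_on_subset[OF inj, of "{i\<in>A. r i < k}"]] by auto
  then show ?thesis unfolding r_def .
qed

text \<open>With ties broken by index, "ranks above" is a strict total order, so exactly k bidders win.\<close>
lemma card_eff_alloc:
  assumes "k \<le> n"
  shows "card {i\<in>{..<n}. eff_alloc n k i v} = k"
proof -
  have "card {i\<in>{..<n}. card {j\<in>{..<n}. v i < v j \<or> (v j = v i \<and> j < i)} < k} = k"
    by (rule card_rank_less) (use assms in auto)
  then show ?thesis unfolding eff_alloc_def by (simp add: conj_commute cong: conj_cong)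
qed

lemma sum_eff_alloc:
  "(\<Sum>i<n. of_bool (eff_alloc n k i v) * c i) = (\<Sum>i\<in>{i\<in>{..<n}. eff_alloc n k i v}. c i :: real)"
  unfolding sum.inter_filter[OF finite_lessThan] by (intro sum.cong) auto

lemma sum_of_bool_eff_alloc:
  assumes "k \<le> n"
  shows "(\<Sum>i<n. of_bool (eff_alloc n k i v) :: real) = real k"
  using sum_eff_alloc[of n k v "\<lambda>_. 1"] card_eff_alloc[OF assms] by simp

lemma square_sum_eff_alloc_le:
  assumes "k \<le> n"
  shows "(\<Sum>i<n. of_bool (eff_alloc n k i v) * c i)\<^sup>2
    \<le> real k * (\<Sum>i<n. of_bool (eff_alloc n k i v) * (c i)\<^sup>2)"
  using sum_squared_le_sum_of_squares[of c "{i\<in>{..<n}. eff_alloc n k i v}"]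
  unfolding sum_eff_alloc card_eff_alloc[OF assms] by (simp only: mult.commute)

section \<open>Measurability of comparison-invariant functions\<close>

text \<open>A function of a profile that depends only on the pairwise comparisons of its n entries takes
  at most finitely many values, each on a finite Boolean combination of sets {x. F x a \<le> F x b}.\<close>
lemma measurable_comparison_invariant:
  fixes H :: "(nat \<Rightarrow> real) \<Rightarrow> 'b::countable"
  assumes F: "\<And>j. j < n \<Longrightarrow> (\<lambda>x. F x j) \<in> borel_measurable N"
    and H: "\<And>u w. \<forall>a<n. \<forall>b<n. (u a \<le> u b) = (w a \<le> w b) \<Longrightarrow> H u = H w"
  shows "(\<lambda>x. H (F x)) \<in> measurable N (count_space UNIV)"
proof -
  define S where "S = {..<n} \<times> {..<n}"
  define C where "C u = {p\<in>S. u (fst p) \<le> u (snd p)}" for u :: "nat \<Rightarrow> real"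
  have "finite S" unfolding S_def by simp
  have H_C: "H u = H w" if "C u = C w" for u w
  proof (rule H, intro allI impI)
    fix a b assume "a < n" "b < n"
    then have "(a, b) \<in> S" unfolding S_def by simp
    then show "(u a \<le> u b) = (w a \<le> w b)"
      using that unfolding C_def set_eq_iff by (metis (no_types, lifting) fst_conv mem_Collect_eq snd_conv)
  qed
  have comparison: "{x\<in>space N. (F x a \<le> F x b) = Q} \<in> sets N" if "(a, b) \<in> S" for a b Q
  proof -
    have [measurable]: "(\<lambda>x. F x a) \<in> borel_measurable N" "(\<lambda>x. F x b) \<in> borel_measurable N"
      using that F unfolding S_def by auto
    show ?thesis by measurable
  qed
  have pattern: "{x\<in>space N. C (F x) = T} \<in> sets N" if "T \<subseteq> S" for T
  proof -
    have "{x\<in>space N. C (F x) = T} = {x\<in>space N. \<forall>p\<in>S. (F x (fst p) \<le> F x (snd p)) = (p \<in> T)}"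
      using that unfolding C_def by auto
    also have "\<dots> \<in> sets N"
      using \<open>finite S\<close> comparison by (intro sets.sets_Collect_finite_All) auto
    finally show ?thesis .
  qed
  show ?thesis
  proof (subst measurable_count_space_eq2_countable, intro conjI ballI)
    fix y
    define Ts where "Ts = {T. T \<subseteq> S \<and> (\<exists>u. C u = T \<and> H u = y)}"
    have "(\<lambda>x. H (F x)) -` {y} \<inter> space N = (\<Union>T\<in>Ts. {x\<in>space N. C (F x) = T})"
    proof (intro equalityI subsetI)
      fix x assume "x \<in> (\<lambda>x. H (F x)) -` {y} \<inter> space N"
      moreover have "C (F x) \<subseteq> S" unfolding C_def by auto
      ultimately show "x \<in> (\<Union>T\<in>Ts. {x\<in>space N. C (F x) = T})" unfolding Ts_def by auto
    next
      fix x assume "x \<in> (\<Union>T\<in>Ts. {x\<in>space N. C (F x) = T})"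
      then obtain u where "x \<in> space N" "C (F x) = C u" "H u = y" unfolding Ts_def by auto
      then show "x \<in> (\<lambda>x. H (F x)) -` {y} \<inter> space N" using H_C[of "F x" u] by simp
    qed
    also have "\<dots> \<in> sets N"
      using \<open>finite S\<close> pattern by (intro sets.finite_UN) (auto simp: Ts_def)
    finally show "(\<lambda>x. H (F x)) -` {y} \<inter> space N \<in> sets N" .
  qed auto
qed

lemma borel_measurable_eff_alloc:
  assumes "\<And>j. j < n \<Longrightarrow> (\<lambda>x. F x j) \<in> borel_measurable N"
  shows "(\<lambda>x. of_bool (eff_alloc n k i (F x)) :: real) \<in> borel_measurable N"
proof -
  have "(\<lambda>x. eff_alloc n k i (F x)) \<in> measurable N (count_space UNIV)"
  proof (rule measurable_comparison_invariant[where n=n, OF assms])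
    fix u w :: "nat \<Rightarrow> real" assume same_order: "\<forall>a<n. \<forall>b<n. (u a \<le> u b) = (w a \<le> w b)"
    show "eff_alloc n k i u = eff_alloc n k i w"
    proof (cases "i < n")
      case True
      then have "{j \<in> {..<n}. u i < u j \<or> (u j = u i \<and> j < i)}
          = {j \<in> {..<n}. w i < w j \<or> (w j = w i \<and> j < i)}"
        using same_order by (auto simp: less_le_not_le order_eq_iff)
      then show ?thesis unfolding eff_alloc_def by simp
    qed (simp add: eff_alloc_def)
  qed
  then show ?thesis by (rule measurable_compose) simp
qed

lemma borel_measurable_order_stat:
  assumes F: "\<And>j. j < n \<Longrightarrow> (\<lambda>x. F x j) \<in> borel_measurable N" and m: "m - 1 < n"
  shows "(\<lambda>x. order_stat n (F x) m) \<in> borel_measurable N"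
proof -
  have index: "(\<lambda>x. order_stat_index n (F x) m) \<in> measurable N (count_space UNIV)"
    by (rule measurable_comparison_invariant[where n=n, OF F]) (auto intro: order_stat_index_cong)
  have "(\<lambda>x. order_stat n (F x) m) = (\<lambda>x. \<Sum>j<n. F x j * of_bool (order_stat_index n (F x) m = j))"
    using order_stat_index_less[OF m] by (intro ext) (simp add: order_stat_eq_index[OF m] if_distrib)
  moreover have "(\<lambda>x. \<Sum>j<n. F x j * of_bool (order_stat_index n (F x) m = j)) \<in> borel_measurable N"
  proof (intro borel_measurable_sum borel_measurable_times)
    fix j assume "j \<in> {..<n}"
    then show "(\<lambda>x. F x j) \<in> borel_measurable N" using F by auto
    show "(\<lambda>x. of_bool (order_stat_index n (F x) m = j) :: real) \<in> borel_measurable N"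
      by (rule measurable_compose[OF index]) simp
  qed
  ultimately show ?thesis by (simp only:)
qed

section \<open>Integration over product measures\<close>

lemma (in finite_measure) integrable_square_const_bound:
  fixes h :: "'a \<Rightarrow> real"
  assumes "h \<in> borel_measurable M" and "AE x in M. \<bar>h x\<bar> \<le> B"
  shows "integrable M (\<lambda>x. (h x)\<^sup>2)"
proof (rule integrable_const_bound)
  show "AE x in M. norm ((h x)\<^sup>2) \<le> B\<^sup>2"
    using assms(2) by eventually_elim (use power_mono[of "\<bar>_\<bar>" B 2] in auto)
qed (use assms(1) in simp)

lemma measurable_fun_upd_const_PiM:
  assumes "i \<in> I" and "x \<in> space P"
  shows "(\<lambda>w. w(i := x)) \<in> measurable (PiM I (\<lambda>_. P)) (PiM I (\<lambda>_. P))"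
  by (rule measurable_fun_upd[where J=I, OF _ measurable_id measurable_const]) (use assms in auto)

context
  fixes P :: "'a measure" and I :: "'i set" and i :: 'i
  assumes P: "prob_space P" and i: "i \<in> I"
begin

lemma measurable_fun_upd_PiM:
  "(\<lambda>(x, w). w(i := x)) \<in> measurable (P \<Otimes>\<^sub>M PiM I (\<lambda>_. P)) (PiM I (\<lambda>_. P))"
proof -
  have "(\<lambda>z. (snd z)(i := fst z)) \<in> measurable (P \<Otimes>\<^sub>M PiM I (\<lambda>_. P)) (PiM I (\<lambda>_. P))"
    by (rule measurable_fun_upd[where J=I, OF _ measurable_snd measurable_fst]) (use i in auto)
  then show ?thesis by (simp add: case_prod_beta')
qed

lemma distr_fun_upd_PiM:
  "distr (P \<Otimes>\<^sub>M PiM I (\<lambda>_. P)) (PiM I (\<lambda>_. P)) (\<lambda>(x, w). w(i := x)) = PiM I (\<lambda>_. P)"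
  using distr_pair_PiM_eq_PiM[of I "\<lambda>_. P" i] P i by (simp add: insert_absorb)

lemma
  fixes h :: "('i \<Rightarrow> 'a) \<Rightarrow> real"
  assumes h: "integrable (PiM I (\<lambda>_. P)) h"
  shows integrable_integral_fun_upd: "integrable P (\<lambda>x. \<integral>w. h (w(i := x)) \<partial>PiM I (\<lambda>_. P))"
    and integral_PiM_fun_upd: "integral\<^sup>L (PiM I (\<lambda>_. P)) h = (\<integral>x. (\<integral>w. h (w(i := x)) \<partial>PiM I (\<lambda>_. P)) \<partial>P)"
proof -
  interpret P: prob_space P by (rule P)
  interpret PI: prob_space "PiM I (\<lambda>_. P)" using P by (intro prob_space_PiM)
  interpret pair_sigma_finite P "PiM I (\<lambda>_. P)" ..
  have "integrable (P \<Otimes>\<^sub>M PiM I (\<lambda>_. P)) (\<lambda>z. h ((\<lambda>(x, w). w(i := x)) z))"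
    using integrable_distr_eq[OF measurable_fun_upd_PiM borel_measurable_integrable[OF h]] h
    by (simp only: distr_fun_upd_PiM)
  then have h_upd: "integrable (P \<Otimes>\<^sub>M PiM I (\<lambda>_. P)) (\<lambda>(x, w). h (w(i := x)))"
    by (simp add: case_prod_beta')
  show "integrable P (\<lambda>x. \<integral>w. h (w(i := x)) \<partial>PiM I (\<lambda>_. P))"
    using integrable_fst'[OF h_upd] by simp
  have "integral\<^sup>L (PiM I (\<lambda>_. P)) h
      = integral\<^sup>L (distr (P \<Otimes>\<^sub>M PiM I (\<lambda>_. P)) (PiM I (\<lambda>_. P)) (\<lambda>(x, w). w(i := x))) h"
    by (simp add: distr_fun_upd_PiM)
  also have "\<dots> = (\<integral>z. h ((\<lambda>(x, w). w(i := x)) z) \<partial>(P \<Otimes>\<^sub>M PiM I (\<lambda>_. P)))"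
    using h by (intro integral_distr measurable_fun_upd_PiM) auto
  also have "\<dots> = (\<integral>x. (\<integral>w. h (w(i := x)) \<partial>PiM I (\<lambda>_. P)) \<partial>P)"
    using integral_fst'[OF h_upd] by (simp add: case_prod_beta')
  finally show "integral\<^sup>L (PiM I (\<lambda>_. P)) h = (\<integral>x. (\<integral>w. h (w(i := x)) \<partial>PiM I (\<lambda>_. P)) \<partial>P)" .
qed

lemma borel_measurable_integral_fun_upd:
  fixes h :: "('i \<Rightarrow> 'a) \<Rightarrow> real"
  assumes "h \<in> borel_measurable (PiM I (\<lambda>_. P))"
  shows "(\<lambda>x. \<integral>w. h (w(i := x)) \<partial>PiM I (\<lambda>_. P)) \<in> borel_measurable P"
proof -
  interpret PI: prob_space "PiM I (\<lambda>_. P)" using P by (intro prob_space_PiM)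
  have "(\<lambda>z. h ((\<lambda>(x, w). w(i := x)) z)) \<in> borel_measurable (P \<Otimes>\<^sub>M PiM I (\<lambda>_. P))"
    by (rule measurable_compose[OF measurable_fun_upd_PiM assms])
  then have "case_prod (\<lambda>x w. h (w(i := x))) \<in> borel_measurable (P \<Otimes>\<^sub>M PiM I (\<lambda>_. P))"
    by (simp add: case_prod_beta')
  then show ?thesis by (rule PI.borel_measurable_lebesgue_integral)
qed

lemma integral_PiM_mono_fun_upd:
  fixes g h :: "('i \<Rightarrow> 'a) \<Rightarrow> real"
  assumes g: "integrable (PiM I (\<lambda>_. P)) g" and h: "integrable (PiM I (\<lambda>_. P)) h"
    and le: "AE x in P. (\<integral>w. g (w(i := x)) \<partial>PiM I (\<lambda>_. P)) \<le> (\<integral>w. h (w(i := x)) \<partial>PiM I (\<lambda>_. P))"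
  shows "integral\<^sup>L (PiM I (\<lambda>_. P)) g \<le> integral\<^sup>L (PiM I (\<lambda>_. P)) h"
  unfolding integral_PiM_fun_upd[OF g] integral_PiM_fun_upd[OF h]
  using integrable_integral_fun_upd[OF g] integrable_integral_fun_upd[OF h] le
  by (rule integral_mono_AE)

lemma integral_PiM_cong_fun_upd:
  fixes g h :: "('i \<Rightarrow> 'a) \<Rightarrow> real"
  assumes "integrable (PiM I (\<lambda>_. P)) g" and "integrable (PiM I (\<lambda>_. P)) h"
    and "AE x in P. (\<integral>w. g (w(i := x)) \<partial>PiM I (\<lambda>_. P)) = (\<integral>w. h (w(i := x)) \<partial>PiM I (\<lambda>_. P))"
  shows "integral\<^sup>L (PiM I (\<lambda>_. P)) g = integral\<^sup>L (PiM I (\<lambda>_. P)) h"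
  using assms by (intro order.antisym integral_PiM_mono_fun_upd) (auto elim: AE_mp)

end

lemma integral_weighted_square_le:
  fixes g a :: "'a \<Rightarrow> real"
  assumes a: "integrable M a" "AE x in M. 0 \<le> a x"
    and ga: "integrable M (\<lambda>x. g x * a x)" and g2a: "integrable M (\<lambda>x. (g x)\<^sup>2 * a x)"
  shows "(\<integral>x. g x * a x \<partial>M)\<^sup>2 \<le> (\<integral>x. a x \<partial>M) * (\<integral>x. (g x)\<^sup>2 * a x \<partial>M)"
proof (cases "(\<integral>x. a x \<partial>M) = 0")
  case True
  then have "AE x in M. a x = 0"
    using integral_nonneg_eq_0_iff_AE[OF a] by simp
  then have "(\<integral>x. g x * a x \<partial>M) = 0"
    by (intro integral_eq_zero_AE) auto
  then show ?thesis using True by simp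
next
  case False
  define A0 A1 A2 where "A0 = (\<integral>x. a x \<partial>M)" and "A1 = (\<integral>x. g x * a x \<partial>M)"
    and "A2 = (\<integral>x. (g x)\<^sup>2 * a x \<partial>M)"
  define c where "c = A1 / A0"
  have "A0 > 0" using False a integral_nonneg_AE[of a M] by (simp add: A0_def)
  have "0 \<le> (\<integral>x. (g x - c)\<^sup>2 * a x \<partial>M)"
    using a(2) by (intro integral_nonneg_AE) (auto elim: AE_mp)
  also have "(\<integral>x. (g x - c)\<^sup>2 * a x \<partial>M) = (\<integral>x. (g x)\<^sup>2 * a x - 2 * c * (g x * a x) + c\<^sup>2 * a x \<partial>M)"
    by (rule Bochner_Integration.integral_cong) (simp_all add: power2_eq_square algebra_simps)
  also have "\<dots> = A2 - 2 * c * A1 + c\<^sup>2 * A0"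
    using a ga g2a by (simp add: A0_def A1_def A2_def)
  also have "\<dots> = A2 - A1\<^sup>2 / A0"
    using \<open>A0 > 0\<close> by (simp add: c_def field_simps power2_eq_square)
  finally have "A1\<^sup>2 \<le> A0 * A2"
    using \<open>A0 > 0\<close> by (simp add: field_simps)
  then show ?thesis by (simp only: A0_def A1_def A2_def)
qed

section \<open>Moments of the two revenues\<close>

lemma sets_value_dist: "sets (value_dist f vbar) = sets borel"
  by (simp add: value_dist_def)

lemma space_value_dist: "space (value_dist f vbar) = UNIV"
  by (simp add: value_dist_def)

lemma measurable_profile_component:
  assumes "j < n"
  shows "(\<lambda>v. v j) \<in> borel_measurable (profile_dist n f vbar)"
proof -
  have "(\<lambda>v. v j) \<in> measurable (profile_dist n f vbar) (value_dist f vbar)"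
    unfolding profile_dist_def using assms by (intro measurable_component_singleton) auto
  then show ?thesis by (simp add: measurable_cong_sets[OF refl sets_value_dist])
qed

text \<open>\<open>winning_moment n k f vbar p i x\<close> is \<open>E[v\<^sub>(\<^sub>k\<^sub>+\<^sub>1\<^sub>)\<^sup>p A\<^sub>i(v) | v\<^sub>i = x]\<close>.\<close>
definition winning_moment :: "nat \<Rightarrow> nat \<Rightarrow> (real \<Rightarrow> real) \<Rightarrow> real \<Rightarrow> nat \<Rightarrow> nat \<Rightarrow> real \<Rightarrow> real" where
  "winning_moment n k f vbar p i x =
     (\<integral>w. order_stat n (w(i := x)) (k+1) ^ p * of_bool (eff_alloc n k i (w(i := x))) \<partial>profile_dist n f vbar)"

lemma bid_fn_eq_winning_moment:
  "bid_fn n k f vbar i x =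
    (if x \<le> 0 then 0 else winning_moment n k f vbar 1 i x / winning_moment n k f vbar 0 i x)"
proof -
  let ?M = "profile_dist n f vbar"
  have "winning_moment n k f vbar 0 i x = (\<integral>w. indicator {w. eff_alloc n k i (w(i := x))} w \<partial>?M)"
    unfolding winning_moment_def by (rule Bochner_Integration.integral_cong) (auto simp: indicator_def)
  also have "\<dots> = measure ?M {w \<in> space ?M. eff_alloc n k i (w(i := x))}"
    by (simp add: Int_def conj_commute)
  finally show ?thesis unfolding bid_fn_def winning_moment_def by simp
qed

context
  fixes f :: "real \<Rightarrow> real" and vbar :: real
  assumes f_measurable: "f \<in> borel_measurable borel"
    and f_density: "(\<integral>\<^sup>+x. ennreal (f x * indicator {0..vbar} x) \<partial>lborel) = 1"
begin

lemma prob_space_value_dist: "prob_space (value_dist f vbar)"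
proof (rule prob_spaceI)
  have "(\<lambda>x. ennreal (f x * indicator {0..vbar} x)) \<in> borel_measurable lborel"
    using f_measurable by measurable
  then show "emeasure (value_dist f vbar) (space (value_dist f vbar)) = 1"
    unfolding value_dist_def using f_density by (subst emeasure_density) auto
qed

lemma prob_space_profile_dist: "prob_space (profile_dist n f vbar)"
  unfolding profile_dist_def using prob_space_value_dist by (intro prob_space_PiM)

lemma AE_value_dist: "AE x in value_dist f vbar. 0 < x \<and> x \<le> vbar"
proof -
  have "AE x in lborel. 0 < ennreal (f x * indicator {0..vbar} x) \<longrightarrow> 0 < x \<and> x \<le> vbar"
    using AE_lborel_singleton[of "0::real"] by eventually_elim (auto simp: indicator_def)
  then show ?thesis
    unfolding value_dist_def using f_measurable by (subst AE_density) auto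
qed

lemma AE_profile_dist: "AE v in profile_dist n f vbar. \<forall>j<n. 0 < v j \<and> v j \<le> vbar"
proof -
  have "AE v in profile_dist n f vbar. \<forall>j\<in>{..<n}. 0 < v j \<and> v j \<le> vbar"
    unfolding profile_dist_def using prob_space_value_dist AE_value_dist
    by (intro AE_finite_allI AE_PiM_component) auto
  then show ?thesis by eventually_elim auto
qed

context
  fixes n k :: nat
  assumes k_less_n: "k < n" and vbar_pos: "0 < vbar"
begin

abbreviation (input) "M \<equiv> profile_dist n f vbar"
abbreviation (input) "Y v \<equiv> order_stat n v (k + 1)"
abbreviation (input) "A i v \<equiv> (of_bool (eff_alloc n k i v) :: real)"
abbreviation (input) "b i \<equiv> bid_fn n k f vbar i"
abbreviation (input) "m p i \<equiv> winning_moment n k f vbar p i"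

lemma order_stat_between_vbar: "\<forall>j<n. 0 \<le> v j \<and> v j \<le> vbar \<Longrightarrow> 0 \<le> Y v \<and> Y v \<le> vbar"
  using order_stat_between[of "k + 1" n] k_less_n by simp

lemma AE_order_stat_between: "AE v in M. 0 \<le> Y v \<and> Y v \<le> vbar"
  using AE_profile_dist by eventually_elim (rule order_stat_between_vbar, auto)

lemma AE_order_stat_fun_upd_between:
  assumes "0 < x" "x \<le> vbar"
  shows "AE w in M. 0 \<le> Y (w(i := x)) \<and> Y (w(i := x)) \<le> vbar"
  using AE_profile_dist by eventually_elim (rule order_stat_between_vbar, use assms in auto)

lemma borel_measurable_profile_order_stat: "(\<lambda>v. Y v) \<in> borel_measurable M"
  by (rule borel_measurable_order_stat[where n=n, OF measurable_profile_component])
    (use k_less_n in simp_all)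

lemma borel_measurable_profile_alloc: "(\<lambda>v. A i v) \<in> borel_measurable M"
  by (rule borel_measurable_eff_alloc[where n=n, OF measurable_profile_component])

lemma borel_measurable_order_stat_pow_alloc: "(\<lambda>v. Y v ^ p * A i v) \<in> borel_measurable M"
  using borel_measurable_profile_order_stat borel_measurable_profile_alloc by measurable

lemma integrable_profile_dist_bounded:
  fixes h :: "(nat \<Rightarrow> real) \<Rightarrow> real"
  assumes "h \<in> borel_measurable M" and "AE v in M. \<bar>h v\<bar> \<le> B"
  shows "integrable M h" and "integrable M (\<lambda>v. (h v)\<^sup>2)"
proof -
  interpret prob_space M by (rule prob_space_profile_dist)
  show "integrable M h" using assms by (intro integrable_const_bound[where B=B]) auto
  show "integrable M (\<lambda>v. (h v)\<^sup>2)" using assms by (rule integrable_square_const_bound)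
qed

lemma integrable_order_stat_pow_alloc: "integrable M (\<lambda>v. Y v ^ p * A i v)"
proof (rule integrable_profile_dist_bounded(1)[where B="vbar ^ p"])
  show "AE v in M. \<bar>Y v ^ p * A i v\<bar> \<le> vbar ^ p"
    using AE_order_stat_between by eventually_elim (auto intro: power_mono)
qed (rule borel_measurable_order_stat_pow_alloc)

lemma integrable_order_stat_pow_alloc_fun_upd:
  assumes "i < n" "0 < x" "x \<le> vbar"
  shows "integrable M (\<lambda>w. Y (w(i := x)) ^ p * A i (w(i := x)))"
proof (rule integrable_profile_dist_bounded(1)[where B="vbar ^ p"])
  show "AE w in M. \<bar>Y (w(i := x)) ^ p * A i (w(i := x))\<bar> \<le> vbar ^ p"
    using AE_order_stat_fun_upd_between[OF assms(2,3), of i] by eventually_elim (auto intro: power_mono)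
  have "(\<lambda>w. w(i := x)) \<in> measurable M M"
    unfolding profile_dist_def using assms(1)
    by (intro measurable_fun_upd_const_PiM) (auto simp: space_value_dist)
  then show "(\<lambda>w. Y (w(i := x)) ^ p * A i (w(i := x))) \<in> borel_measurable M"
    by (rule measurable_compose[OF _ borel_measurable_order_stat_pow_alloc])
qed

lemma winning_moment_nonneg:
  assumes "0 < x" "x \<le> vbar"
  shows "0 \<le> m p i x"
  unfolding winning_moment_def using AE_order_stat_fun_upd_between[OF assms, of i]
  by (intro integral_nonneg_AE) (auto elim: AE_mp)

lemma winning_moment_1_le:
  assumes "i < n" "0 < x" "x \<le> vbar"
  shows "m 1 i x \<le> vbar * m 0 i x"
proof -
  have "m 1 i x \<le> (\<integral>w. vbar * A i (w(i := x)) \<partial>M)"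
    unfolding winning_moment_def
    using integrable_order_stat_pow_alloc_fun_upd[OF assms, of 0] AE_order_stat_fun_upd_between[OF assms(2,3), of i]
    by (intro integral_mono_AE integrable_order_stat_pow_alloc_fun_upd[OF assms]) (auto elim: AE_mp)
  then show ?thesis by (simp add: winning_moment_def)
qed

lemma winning_moment_square_le:
  assumes "i < n" "0 < x" "x \<le> vbar"
  shows "(m 1 i x)\<^sup>2 \<le> m 0 i x * m 2 i x"
  using integral_weighted_square_le[of M "\<lambda>w. A i (w(i := x))" "\<lambda>w. Y (w(i := x))"]
    integrable_order_stat_pow_alloc_fun_upd[OF assms, of 0]
    integrable_order_stat_pow_alloc_fun_upd[OF assms, of 1]
    integrable_order_stat_pow_alloc_fun_upd[OF assms, of 2]
  by (simp add: winning_moment_def)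

text \<open>Where \<open>m 0 i x = 0\<close>, \<open>bid_fn\<close> is \<open>0 / 0 = 0\<close>, and Cauchy-Schwarz forces \<open>m 1 i x = 0\<close> too.\<close>
lemma bid_fn_mult_winning_moment:
  assumes "i < n" "0 < x" "x \<le> vbar"
  shows "b i x * m 0 i x = m 1 i x"
proof (cases "m 0 i x = 0")
  case True
  then have "m 1 i x = 0" using winning_moment_square_le[OF assms] by simp
  then show ?thesis using True by simp
qed (use assms in \<open>simp add: bid_fn_eq_winning_moment\<close>)

lemma bid_fn_square_mult_winning_moment_le:
  assumes "i < n" "0 < x" "x \<le> vbar"
  shows "(b i x)\<^sup>2 * m 0 i x \<le> m 2 i x"
proof (cases "m 0 i x = 0")
  case True
  then show ?thesis using winning_moment_nonneg[OF assms(2,3)] by simp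
next
  case False
  then have "0 < m 0 i x" using winning_moment_nonneg[OF assms(2,3), of 0 i] by simp
  then show ?thesis using winning_moment_square_le[OF assms] assms
    by (simp add: bid_fn_eq_winning_moment power_divide field_simps power2_eq_square)
qed

lemma bid_fn_between:
  assumes "i < n" "0 < x" "x \<le> vbar"
  shows "0 \<le> b i x \<and> b i x \<le> vbar"
proof (cases "m 0 i x = 0")
  case True
  then show ?thesis using vbar_pos by (simp add: bid_fn_eq_winning_moment)
next
  case False
  then have "0 < m 0 i x" using winning_moment_nonneg[OF assms(2,3), of 0 i] by simp
  then show ?thesis using winning_moment_1_le[OF assms] winning_moment_nonneg[OF assms(2,3), of 1 i] assms
    by (simp add: bid_fn_eq_winning_moment divide_le_eq)
qed

lemma borel_measurable_bid_fn:
  assumes "i < n"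
  shows "(\<lambda>v. b i (v i)) \<in> borel_measurable M"
proof -
  have "m p i \<in> borel_measurable (value_dist f vbar)" for p
    using borel_measurable_integral_fun_upd[OF prob_space_value_dist, of i "{..<n}"]
      borel_measurable_order_stat_pow_alloc[of p i] assms
    unfolding winning_moment_def[abs_def] profile_dist_def by simp
  then have [measurable]: "m p i \<in> borel_measurable borel" for p
    by (simp add: measurable_cong_sets[OF sets_value_dist refl])
  have "b i \<in> borel_measurable borel"
    unfolding bid_fn_eq_winning_moment[abs_def] by measurable
  then show ?thesis by (rule measurable_compose[OF measurable_profile_component[OF assms]])
qed

lemma AE_bid_fn_between: "AE v in M. \<forall>i<n. 0 \<le> b i (v i) \<and> b i (v i) \<le> vbar"
  using AE_profile_dist by eventually_elim (auto simp: bid_fn_between)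

lemma integrable_alloc_bid_pow:
  assumes "i < n"
  shows "integrable M (\<lambda>v. A i v * b i (v i) ^ p)"
proof (rule integrable_profile_dist_bounded(1)[where B="vbar ^ p"])
  show "AE v in M. \<bar>A i v * b i (v i) ^ p\<bar> \<le> vbar ^ p"
    using AE_bid_fn_between by eventually_elim (use assms in \<open>auto intro: power_mono\<close>)
  show "(\<lambda>v. A i v * b i (v i) ^ p) \<in> borel_measurable M"
    using borel_measurable_order_stat_pow_alloc[of 0 i] borel_measurable_bid_fn[OF assms] by simp
qed

lemma integral_alloc_bid_eq:
  assumes "i < n"
  shows "(\<integral>v. A i v * b i (v i) \<partial>M) = (\<integral>v. Y v * A i v \<partial>M)"
proof -
  have "(\<integral>v. A i v * b i (v i) ^ 1 \<partial>M) = (\<integral>v. Y v ^ 1 * A i v \<partial>M)"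
  proof (rule integral_PiM_cong_fun_upd[OF prob_space_value_dist, of i "{..<n}", folded profile_dist_def])
    show "AE x in value_dist f vbar. (\<integral>w. A i (w(i := x)) * b i ((w(i := x)) i) ^ 1 \<partial>M)
        = (\<integral>w. Y (w(i := x)) ^ 1 * A i (w(i := x)) \<partial>M)"
      using AE_value_dist
    proof eventually_elim
      case (elim x)
      then show ?case
        using bid_fn_mult_winning_moment[OF assms, of x] by (simp add: winning_moment_def mult.commute)
    qed
  qed (use assms integrable_alloc_bid_pow[OF assms, of 1] integrable_order_stat_pow_alloc[of 1 i] in simp_all)
  then show ?thesis by simp
qed

lemma integral_alloc_bid_square_le:
  assumes "i < n"
  shows "(\<integral>v. A i v * (b i (v i))\<^sup>2 \<partial>M) \<le> (\<integral>v. (Y v)\<^sup>2 * A i v \<partial>M)"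
proof (rule integral_PiM_mono_fun_upd[OF prob_space_value_dist, of i "{..<n}", folded profile_dist_def])
  show "AE x in value_dist f vbar. (\<integral>w. A i (w(i := x)) * (b i ((w(i := x)) i))\<^sup>2 \<partial>M)
      \<le> (\<integral>w. (Y (w(i := x)))\<^sup>2 * A i (w(i := x)) \<partial>M)"
    using AE_value_dist
  proof eventually_elim
    case (elim x)
    then show ?case
      using bid_fn_square_mult_winning_moment_le[OF assms, of x]
      by (simp add: winning_moment_def mult.commute)
  qed
qed (use assms integrable_alloc_bid_pow[OF assms, of 2] integrable_order_stat_pow_alloc[of 2 i] in simp_all)

lemma rev_disc_square_le:
  "(rev_disc n k f vbar v)\<^sup>2 \<le> real k * (\<Sum>i<n. A i v * (b i (v i))\<^sup>2)"
  unfolding rev_disc_def using k_less_n by (intro square_sum_eff_alloc_le) simp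

lemma rev_unif_eq_sum: "rev_unif n k v = (\<Sum>i<n. Y v * A i v)"
  using sum_of_bool_eff_alloc[of k n v] k_less_n
  by (simp add: rev_unif_def sum_distrib_left[symmetric] mult.commute)

lemma rev_unif_square_eq_sum: "(rev_unif n k v)\<^sup>2 = real k * (\<Sum>i<n. (Y v)\<^sup>2 * A i v)"
  using sum_of_bool_eff_alloc[of k n v] k_less_n
  by (simp add: rev_unif_def sum_distrib_left[symmetric] power_mult_distrib power2_eq_square mult.commute)

lemma
  shows integrable_rev_disc: "integrable M (rev_disc n k f vbar)"
    and integrable_rev_disc_square: "integrable M (\<lambda>v. (rev_disc n k f vbar v)\<^sup>2)"
proof -
  have "rev_disc n k f vbar \<in> borel_measurable M"
    unfolding rev_disc_def
    by (intro borel_measurable_sum borel_measurable_times borel_measurable_bid_fn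
        borel_measurable_profile_alloc) simp
  moreover have "AE v in M. \<bar>rev_disc n k f vbar v\<bar> \<le> real n * vbar"
    using AE_bid_fn_between
  proof eventually_elim
    case (elim v)
    have "\<bar>rev_disc n k f vbar v\<bar> \<le> (\<Sum>i<n. \<bar>A i v * b i (v i)\<bar>)"
      unfolding rev_disc_def by (rule sum_abs)
    also have "\<dots> \<le> (\<Sum>i<n. vbar)"
      using elim by (intro sum_mono) auto
    finally show ?case by simp
  qed
  ultimately show "integrable M (rev_disc n k f vbar)" "integrable M (\<lambda>v. (rev_disc n k f vbar v)\<^sup>2)"
    by (rule integrable_profile_dist_bounded)+
qed

lemma
  shows integrable_rev_unif: "integrable M (rev_unif n k)"
    and integrable_rev_unif_square: "integrable M (\<lambda>v. (rev_unif n k v)\<^sup>2)"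
proof -
  have "rev_unif n k \<in> borel_measurable M"
    unfolding rev_unif_def[abs_def] using borel_measurable_profile_order_stat by simp
  moreover have "AE v in M. \<bar>rev_unif n k v\<bar> \<le> real k * vbar"
    using AE_order_stat_between by eventually_elim (auto simp: rev_unif_def intro: mult_left_mono)
  ultimately show "integrable M (rev_unif n k)" "integrable M (\<lambda>v. (rev_unif n k v)\<^sup>2)"
    by (rule integrable_profile_dist_bounded)+
qed

lemma integral_rev_disc_eq: "integral\<^sup>L M (rev_disc n k f vbar) = integral\<^sup>L M (rev_unif n k)"
proof -
  have "integral\<^sup>L M (rev_disc n k f vbar) = (\<Sum>i<n. \<integral>v. A i v * b i (v i) \<partial>M)"
    unfolding rev_disc_def
    using integrable_alloc_bid_pow[where p=1] by (intro Bochner_Integration.integral_sum) auto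
  also have "\<dots> = (\<Sum>i<n. \<integral>v. Y v * A i v \<partial>M)"
    by (intro sum.cong refl integral_alloc_bid_eq) simp
  also have "\<dots> = integral\<^sup>L M (rev_unif n k)"
    unfolding rev_unif_eq_sum
    using integrable_order_stat_pow_alloc[where p=1] by (intro Bochner_Integration.integral_sum[symmetric]) auto
  finally show ?thesis .
qed

lemma integral_rev_disc_square_le: "(\<integral>v. (rev_disc n k f vbar v)\<^sup>2 \<partial>M) \<le> (\<integral>v. (rev_unif n k v)\<^sup>2 \<partial>M)"
proof -
  have "integrable M (\<lambda>v. \<Sum>i<n. A i v * (b i (v i))\<^sup>2)"
    by (rule Bochner_Integration.integrable_sum) (rule integrable_alloc_bid_pow, simp)
  then have "(\<integral>v. (rev_disc n k f vbar v)\<^sup>2 \<partial>M) \<le> (\<integral>v. real k * (\<Sum>i<n. A i v * (b i (v i))\<^sup>2) \<partial>M)"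
    by (intro integral_mono[OF integrable_rev_disc_square _ rev_disc_square_le]) simp
  also have "\<dots> = real k * (\<Sum>i<n. \<integral>v. A i v * (b i (v i))\<^sup>2 \<partial>M)"
    unfolding integral_mult_right_zero
    by (subst Bochner_Integration.integral_sum) (auto intro: integrable_alloc_bid_pow)
  also have "\<dots> \<le> real k * (\<Sum>i<n. \<integral>v. (Y v)\<^sup>2 * A i v \<partial>M)"
    by (intro mult_left_mono sum_mono integral_alloc_bid_square_le) auto
  also have "\<dots> = (\<integral>v. (rev_unif n k v)\<^sup>2 \<partial>M)"
    unfolding rev_unif_square_eq_sum integral_mult_right_zero
    by (subst Bochner_Integration.integral_sum) (use integrable_order_stat_pow_alloc[where p=2] in auto)
  finally show ?thesis .
qed

end

end

theorem mainTheorem15: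
  fixes n k :: nat and f :: "real \<Rightarrow> real" and vbar :: real
  assumes "1 \<le> k" and "k < n"
    and "vbar > 0"
    and "f \<in> borel_measurable borel"
    and "\<And>x. x \<in> {0..vbar} \<Longrightarrow> f x > 0"
    and "(\<integral>\<^sup>+x. ennreal (f x * indicator {0..vbar} x) \<partial>lborel) = 1"
  shows "var (profile_dist n f vbar) (rev_disc n k f vbar)
         \<le> var (profile_dist n f vbar) (rev_unif n k)"
proof -
  note hyps = assms(4,6,2,3)
  interpret prob_space "profile_dist n f vbar"
    by (rule prob_space_profile_dist[OF assms(4,6)])
  have "var (profile_dist n f vbar) (rev_disc n k f vbar)
      = (\<integral>v. (rev_disc n k f vbar v)\<^sup>2 \<partial>profile_dist n f vbar) - (expectation (rev_disc n k f vbar))\<^sup>2"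
    unfolding var_def by (rule variance_eq[OF integrable_rev_disc[OF hyps] integrable_rev_disc_square[OF hyps]])
  also have "\<dots> \<le> (\<integral>v. (rev_unif n k v)\<^sup>2 \<partial>profile_dist n f vbar) - (expectation (rev_unif n k))\<^sup>2"
    using integral_rev_disc_square_le[OF hyps] integral_rev_disc_eq[OF hyps] by simp
  also have "\<dots> = var (profile_dist n f vbar) (rev_unif n k)"
    unfolding var_def by (rule variance_eq[OF integrable_rev_unif[OF hyps] integrable_rev_unif_square[OF hyps], symmetric])
  finally show ?thesis .
qed

end
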